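(* Let $\mathbf A$ be the BBL transformation of a matrix Laurent polynomial of bandwidth $(p,q)$, and let $L\le R$ be finite integers with $R-L\ge\tau$ (non-empty bulk). Then: (i) $\mathbf P_{L,R}\ker\mathbf A\subseteq\mathcal M_{L,R}$; (ii) if the principal coefficients $a_{p'}$ and $a_{q'}$ are both invertible (i.e. $p\le 0\le q$ and $a_p,a_q$ invertible), then $\mathbf P_{L,R}\ker\mathbf A=\mathcal M_{L,R}$.
   Context: Fix $d\ge1$; $\mathbf M_d$ denotes complex $d\times d$ matrices. $\mathcal V^S_d$ is the vector space of all doubly infinite sequences $\Psi=\{\psi_j\}_{j\in\mathbb Z}$ with $\psi_j\in\mathbb C^d$ (no topology). A matrix Laurent polynomial of bandwidth $(p,q)$ is $A(w,w^{-1})=\sum_{r=p}^q a_rw^r$ with integers $p\le q$, $a_r\in\mathbf M_d$, $a_p\neq0\neq a_q$. Its banded block-Laurent (BBL) transformation $\mathbf A$ acts on $\mathcal V^S_d$ by $(\mathbf A\Psi)_j=\sum_{r=p}^q a_r\psi_{j+r}$. Put $p'=\min(p,0)$, $q'=\max(0,q)$, $\tau=q'-p'$. The principal coefficients are $a_{p'}$ (equal to $a_p$ if $p\le0$ and to $0$ if $p>0$) and $a_{q'}$ (equal to $a_q$ if $q\ge0$ and to $0$ if $q<0$). For $-\infty\le L\le R\le\infty$, $\mathcal V_{L,R}\subseteq\mathcal V^S_d$ is the subspace of sequences with $\psi_j=0$ whenever $j<L$ or $j>R$, and $\mathbf P_{L,R}$ is the projection of $\mathcal V^S_d$ onto $\mathcal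 V_{L,R}$ that replaces $\psi_j$ by $0$ for $j\notin[L,R]$. The bulk solution space is $\mathcal M_{L,R}=\ker\big(\mathbf P_{L-p',R-q'}\mathbf A|_{\mathcal V_{L,R}}\big)\subseteq\mathcal V_{L,R}$ (an infinite endpoint shifted by a finite amount stays infinite). For finite $L\le R$, $\mathcal V_{L,R}\cong\mathbb C^N\otimes\mathbb C^d$ with $N=R-L+1$, and $A_N=\mathbf P_{L,R}\mathbf A|_{\mathcal V_{L,R}}$ is the banded block-Toeplitz (BBT) matrix with blocks $[A_N]_{ij}=a_{j-i}$; with the bulk projector $P_B=\mathbf P_{L-p',R-q'}|_{\mathcal V_{L,R}}$ one has $\mathcal M_{L,R}=\ker P_BA_N$. *)

theory Defs
  imports "HOL-Analysis.Analysis"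
begin

text \<open>Block vectors in C^d are complex^'d, blocks in M_d are complex^'d^'d (d = CARD('d) \<ge> 1).
A matrix Laurent polynomial is given by its coefficient function a :: int \<Rightarrow> M_d, with
bandwidth (p,q): p \<le> q, a p \<noteq> 0, a q \<noteq> 0, and a r = 0 for r outside [p,q].\<close>

definition laurent_bandwidth :: "(int \<Rightarrow> complex^'d^'d) \<Rightarrow> int \<Rightarrow> int \<Rightarrow> bool" where
  "laurent_bandwidth a p q \<longleftrightarrow> p \<le> q \<and> a p \<noteq> 0 \<and> a q \<noteq> 0 \<and> (\<forall>r. r < p \<or> q < r \<longrightarrow> a r = 0)"

definition bbl :: "(int \<Rightarrow> complex^'d^'d) \<Rightarrow> int \<Rightarrow> int \<Rightarrow> (int \<Rightarrow> complex^'d) \<Rightarrow> (int \<Rightarrow> complex^'d)" where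
  "bbl a p q \<Psi> = (\<lambda>j. \<Sum>r=p..q. a r *v \<Psi> (j + r))"

definition seq_space :: "int \<Rightarrow> int \<Rightarrow> (int \<Rightarrow> complex^'d) set" where
  "seq_space L R = {\<Psi>. \<forall>j. j < L \<or> R < j \<longrightarrow> \<Psi> j = 0}"

definition proj :: "int \<Rightarrow> int \<Rightarrow> (int \<Rightarrow> complex^'d) \<Rightarrow> (int \<Rightarrow> complex^'d)" where
  "proj L R \<Psi> = (\<lambda>j. if L \<le> j \<and> j \<le> R then \<Psi> j else 0)"

definition bbl_kernel :: "(int \<Rightarrow> complex^'d^'d) \<Rightarrow> int \<Rightarrow> int \<Rightarrow> (int \<Rightarrow> complex^'d) set" where
  "bbl_kernel a p q = {\<Psi>. bbl a p q \<Psi> = (\<lambda>j. 0)}"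

text \<open>Bulk solution space M_{L,R} = ker (P_{L-p',R-q'} A restricted to V_{L,R}).\<close>
definition bulk_space :: "(int \<Rightarrow> complex^'d^'d) \<Rightarrow> int \<Rightarrow> int \<Rightarrow> int \<Rightarrow> int \<Rightarrow> (int \<Rightarrow> complex^'d) set" where
  "bulk_space a p q L R = {\<Psi> \<in> seq_space L R.
      proj (L - min p 0) (R - max 0 q) (bbl a p q \<Psi>) = (\<lambda>j. 0)}"

end

theory Submission
  imports Defs
begin

text \<open>For \<open>j\<close> in the bulk \<open>[L - p', R - q']\<close> the equation \<open>(\<A>\<Psi>)\<^sub>j = 0\<close> only reads
\<open>\<psi>\<close> on \<open>[L, R]\<close>, which gives (i). Conversely, when \<open>a\<^sub>p\<close> and \<open>a\<^sub>q\<close> are invertible, the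
equation at \<open>j\<close> can be solved for \<open>\<psi>\<^sub>j\<^sub>+\<^sub>q\<close> in terms of values strictly to its left,
and for \<open>\<psi>\<^sub>j\<^sub>+\<^sub>p\<close> in terms of values strictly to its right. Solving these
recurrences outwards from \<open>[L, R]\<close> extends any bulk solution to a sequence in \<open>ker \<A>\<close>; since
\<open>R - L \<ge> q - p\<close>, the rightward recurrence never reads values produced by the leftward one.\<close>

lemma causal_recurrence_solvable:
  fixes F :: "int \<Rightarrow> (int \<Rightarrow> 'a) \<Rightarrow> 'a"
  assumes causal: "\<And>j \<psi> \<psi>'. R < j \<Longrightarrow> (\<And>i. i < j \<Longrightarrow> \<psi> i = \<psi>' i) \<Longrightarrow> F j \<psi> = F j \<psi>'"
  obtains \<Psi> where "\<And>j. j \<le> R \<Longrightarrow> \<Psi> j = \<Phi> j" and "\<And>j. R < j \<Longrightarrow> \<Psi> j = F j \<Psi>"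
proof -
  define g where "g = rec_nat \<Phi> (\<lambda>n \<psi>. \<psi>(R + 1 + int n := F (R + 1 + int n) \<psi>))"
  have g_0: "g 0 = \<Phi>" and g_Suc: "\<And>n. g (Suc n) = (g n)(R + 1 + int n := F (R + 1 + int n) (g n))"
    by (simp_all add: g_def)
  have g_stable: "g m i = g n i" if "i \<le> R + int n" "n \<le> m" for m n i
    using that(2) by (induction m) (use that(1) in \<open>auto simp: g_Suc le_Suc_eq\<close>)
  define \<Psi> where "\<Psi> j = g (nat (j - R)) j" for j
  have \<Psi>_g: "\<Psi> i = g n i" if "i \<le> R + int n" for i n
    unfolding \<Psi>_def using that g_stable[of i "nat (i - R)" n] by simp
  show thesis
  proof
    show "\<Psi> j = \<Phi> j" if "j \<le> R" for j
      using \<Psi>_g[of j 0] that by (simp add: g_0)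
  next
    fix j assume "R < j"
    define n where "n = nat (j - R - 1)"
    with \<open>R < j\<close> have j: "j = R + 1 + int n" by simp
    have "\<Psi> j = F j (g n)"
      using \<Psi>_g[of j "Suc n"] by (simp add: g_Suc j)
    also have "\<dots> = F j \<Psi>"
      using \<open>R < j\<close> \<Psi>_g[of _ n] by (intro causal) (auto simp: j)
    finally show "\<Psi> j = F j \<Psi>" .
  qed
qed

lemma anticausal_recurrence_solvable:
  fixes F :: "int \<Rightarrow> (int \<Rightarrow> 'a) \<Rightarrow> 'a"
  assumes anticausal: "\<And>j \<psi> \<psi>'. j < L \<Longrightarrow> (\<And>i. j < i \<Longrightarrow> \<psi> i = \<psi>' i) \<Longrightarrow> F j \<psi> = F j \<psi>'"
  obtains \<Psi> where "\<And>j. L \<le> j \<Longrightarrow> \<Psi> j = \<Phi> j" and "\<And>j. j < L \<Longrightarrow> \<Psi> j = F j \<Psi>"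
proof -
  obtain \<Psi>' where \<Psi>': "\<And>j. j \<le> - L \<Longrightarrow> \<Psi>' j = \<Phi> (- j)"
    and rec: "\<And>j. - L < j \<Longrightarrow> \<Psi>' j = F (- j) (\<Psi>' \<circ> uminus)"
    by (rule causal_recurrence_solvable[of "- L" "\<lambda>j \<psi>. F (- j) (\<psi> \<circ> uminus)" "\<Phi> \<circ> uminus"])
      (auto intro!: anticausal simp: minus_less_iff)
  have reflect: "\<Psi>' \<circ> uminus = (\<lambda>j. \<Psi>' (- j))" by auto
  show thesis
    by (rule that[of "\<lambda>j. \<Psi>' (- j)"]) (use \<Psi>' rec in \<open>auto simp: reflect\<close>)
qed

lemma bbl_cong:
  assumes "\<And>r. p \<le> r \<Longrightarrow> r \<le> q \<Longrightarrow> \<Psi> (j + r) = \<Phi> (j + r)"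
  shows "bbl a p q \<Psi> j = bbl a p q \<Phi> j"
  unfolding bbl_def using assms by (intro sum.cong) auto

lemma bbl_split_top:
  "p \<le> q \<Longrightarrow> bbl a p q \<Psi> j = a q *v \<Psi> (j + q) + (\<Sum>r=p..q-1. a r *v \<Psi> (j + r))"
proof -
  assume "p \<le> q"
  then have "{p..q} = insert q {p..q-1}" by auto
  then show ?thesis unfolding bbl_def by simp
qed

lemma bbl_split_bottom:
  "p \<le> q \<Longrightarrow> bbl a p q \<Psi> j = a p *v \<Psi> (j + p) + (\<Sum>r=p+1..q. a r *v \<Psi> (j + r))"
proof -
  assume "p \<le> q"
  then have "{p..q} = insert p {p+1..q}" by auto
  then show ?thesis unfolding bbl_def by simp
qed

lemma bbl_eq_0_of_top_recurrence:
  assumes "p \<le> q" "a q ** B = mat 1"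
    and "\<Psi> (j + q) = - (B *v (\<Sum>r=p..q-1. a r *v \<Psi> (j + r)))"
  shows "bbl a p q \<Psi> j = 0"
  using assms by (simp add: bbl_split_top matrix_vector_mul_assoc vec.neg)

lemma bbl_eq_0_of_bottom_recurrence:
  assumes "p \<le> q" "a p ** B = mat 1"
    and "\<Psi> (j + p) = - (B *v (\<Sum>r=p+1..q. a r *v \<Psi> (j + r)))"
  shows "bbl a p q \<Psi> j = 0"
  using assms by (simp add: bbl_split_bottom matrix_vector_mul_assoc vec.neg)

lemma proj_kernel_subset_bulk_space: "proj L R ` bbl_kernel a p q \<subseteq> bulk_space a p q L R"
proof
  fix \<Phi> assume "\<Phi> \<in> proj L R ` bbl_kernel a p q"
  then obtain \<Psi> where ker: "bbl a p q \<Psi> = (\<lambda>j. 0)" and \<Phi>: "\<Phi> = proj L R \<Psi>"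
    unfolding bbl_kernel_def by auto
  have "bbl a p q \<Phi> j = 0" if "L - min p 0 \<le> j" "j \<le> R - max 0 q" for j
  proof -
    have "bbl a p q \<Phi> j = bbl a p q \<Psi> j"
      using that by (intro bbl_cong) (auto simp: \<Phi> proj_def)
    then show ?thesis by (simp add: ker)
  qed
  then show "\<Phi> \<in> bulk_space a p q L R"
    by (auto simp: bulk_space_def seq_space_def proj_def \<Phi>)
qed

lemma bulk_space_subset_proj_kernel:
  assumes "p \<le> 0" "0 \<le> q" "q - p \<le> R - L"
    and Bp: "a p ** Bp = mat 1" and Bq: "a q ** Bq = mat 1"
  shows "bulk_space a p q L R \<subseteq> proj L R ` bbl_kernel a p q"
proof
  fix \<Phi> assume "\<Phi> \<in> bulk_space a p q L R"
  then have supp: "\<And>j. j < L \<or> R < j \<Longrightarrow> \<Phi> j = 0"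
    and "proj (L - p) (R - q) (bbl a p q \<Phi>) = (\<lambda>j. 0)"
    using assms(1,2) by (auto simp: bulk_space_def seq_space_def min_absorb1 max_absorb2)
  then have bulk: "\<And>j. L - p \<le> j \<Longrightarrow> j \<le> R - q \<Longrightarrow> bbl a p q \<Phi> j = 0"
    by (metis (mono_tags) proj_def)
  have pq: "p \<le> q" using assms(1,2) by simp
  obtain \<Psi>\<^sub>R where \<Psi>\<^sub>R_\<Phi>: "\<And>j. j \<le> R \<Longrightarrow> \<Psi>\<^sub>R j = \<Phi> j"
    and \<Psi>\<^sub>R_rec: "\<And>j. R < j \<Longrightarrow> \<Psi>\<^sub>R j = - (Bq *v (\<Sum>r=p..q-1. a r *v \<Psi>\<^sub>R (j - q + r)))"
    by (rule causal_recurrence_solvable[where \<Phi> = \<Phi> and R = R and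
          F = "\<lambda>j \<psi>. - (Bq *v (\<Sum>r=p..q-1. a r *v \<psi> (j - q + r)))"]) (auto intro!: sum.cong)
  obtain \<Psi> where \<Psi>_\<Psi>\<^sub>R: "\<And>j. L \<le> j \<Longrightarrow> \<Psi> j = \<Psi>\<^sub>R j"
    and \<Psi>_rec: "\<And>j. j < L \<Longrightarrow> \<Psi> j = - (Bp *v (\<Sum>r=p+1..q. a r *v \<Psi> (j - p + r)))"
    by (rule anticausal_recurrence_solvable[where \<Phi> = \<Psi>\<^sub>R and L = L and
          F = "\<lambda>j \<psi>. - (Bp *v (\<Sum>r=p+1..q. a r *v \<psi> (j - p + r)))"]) (auto intro!: sum.cong)
  have "bbl a p q \<Psi> j = 0" for j
  proof -
    consider "L - p \<le> j \<and> j \<le> R - q" | "R - q < j" | "j < L - p" by linarith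
    then show ?thesis
    proof cases
      case 1
      then have "bbl a p q \<Psi> j = bbl a p q \<Phi> j"
        by (intro bbl_cong) (simp add: \<Psi>_\<Psi>\<^sub>R \<Psi>\<^sub>R_\<Phi>)
      with 1 show ?thesis by (simp add: bulk)
    next
      case 2
      \<comment> \<open>the window of the rightward recurrence at \<open>j + q\<close> starts at \<open>j + p > L\<close>\<close>
      have "(\<Sum>r=p..q-1. a r *v \<Psi>\<^sub>R (j + r)) = (\<Sum>r=p..q-1. a r *v \<Psi> (j + r))"
        using 2 assms(3) by (intro sum.cong) (auto simp: \<Psi>_\<Psi>\<^sub>R)
      moreover have "\<Psi> (j + q) = - (Bq *v (\<Sum>r=p..q-1. a r *v \<Psi>\<^sub>R (j + r)))"
        using 2 assms by (subst \<Psi>_\<Psi>\<^sub>R) (auto simp: \<Psi>\<^sub>R_rec)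
      ultimately show ?thesis
        using pq Bq by (intro bbl_eq_0_of_top_recurrence) simp_all
    next
      case 3
      then show ?thesis
        using pq Bp by (intro bbl_eq_0_of_bottom_recurrence) (simp_all add: \<Psi>_rec)
    qed
  qed
  moreover have "proj L R \<Psi> = \<Phi>"
    by (auto simp: proj_def fun_eq_iff \<Psi>_\<Psi>\<^sub>R \<Psi>\<^sub>R_\<Phi> supp)
  ultimately show "\<Phi> \<in> proj L R ` bbl_kernel a p q"
    unfolding bbl_kernel_def by force
qed

lemma invertible_coefficient_in_bandwidth:
  assumes "laurent_bandwidth a p q" "invertible (a r)"
  shows "p \<le> r \<and> r \<le> q"
proof -
  have "a r \<noteq> 0"
    using assms(2) by (auto simp: invertible_det_nz simp flip: mat_0)
  with assms(1) show ?thesis by (meson laurent_bandwidth_def not_le)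
qed

theorem mainTheorem2:
  fixes a :: "int \<Rightarrow> complex^'d^'d" and p q L R :: int
  assumes "laurent_bandwidth a p q"
    and "L \<le> R"
    and "R - L \<ge> max 0 q - min p 0"
  shows "proj L R ` bbl_kernel a p q \<subseteq> bulk_space a p q L R \<and>
         (invertible (a (min p 0)) \<and> invertible (a (max 0 q)) \<longrightarrow>
           proj L R ` bbl_kernel a p q = bulk_space a p q L R)"
proof (intro conjI impI)
  show "proj L R ` bbl_kernel a p q \<subseteq> bulk_space a p q L R"
    by (rule proj_kernel_subset_bulk_space)
  assume inv: "invertible (a (min p 0)) \<and> invertible (a (max 0 q))"
  then have "p \<le> 0" "0 \<le> q"
    using invertible_coefficient_in_bandwidth[OF assms(1)] by fastforce+
  then have principal: "min p 0 = p" "max 0 q = q" by simp_all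
  obtain Bp Bq where "a p ** Bp = mat 1" "a q ** Bq = mat 1"
    using inv unfolding principal invertible_def by blast
  with \<open>p \<le> 0\<close> \<open>0 \<le> q\<close> assms(3) principal
  have "bulk_space a p q L R \<subseteq> proj L R ` bbl_kernel a p q"
    by (intro bulk_space_subset_proj_kernel) simp_all
  then show "proj L R ` bbl_kernel a p q = bulk_space a p q L R"
    using proj_kernel_subset_bulk_space by blast
qed

end
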